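(* Let $\Gamma$ be a simplicial complex whose $1$-skeleton (graph) contains, as an induced subgraph, one of the following graphs on four vertices: the disjoint union of two edges $2K_2$, the path $P_4$ with three edges, or the $4$-cycle $C_4$. Then for every simplicial complex $\Delta$ (on a vertex set disjoint from that of $\Gamma$), \[ \mathrm{ctd}(\Delta*\Gamma)\;\ge\;\mathrm{ctd}(\Delta)+1. \]
   Context: Simplicial complexes contain the empty face. Given convex polytopes $P_1,\dots,P_n\subset\mathbb{R}^d$ each containing the origin and a point $\mu\in\mathbb{R}^d$, write $P_\sigma=\sum_{i\in\sigma}P_i$ (Minkowski sum) for $\sigma\subseteq[n]$, with $P_\emptyset=\{0\}$; the Minkowski complex $\Delta(\mathcal{P};\mu)$ is the simplicial complex on vertex set $[n]$ whose faces are the $\sigma\subseteq[n]$ with $\mu\notin P_\sigma$. The convex threshold dimension $\mathrm{ctd}(\Delta)$ of a simplicial complex $\Delta$ on vertex set $[n]$ is the smallest $d$ such that $\Delta=\Delta(\mathcal{P};\mu)$ for some family $\mathcal{P}=(P_1,\dots,P_n)$ of convex bodies (equivalently, convex polytopes) in $\mathbb{R}^d$ containing the origin and some $\mu\in\mathbb{R}^d$; this is finite for every simplicial complex. The join of complexes $\Delta$ and $\Gamma$ on disjoint vertex sets is $\Delta*\Gamma=\{\sigma\uplus\tau:\sigma\in\Delta,\tau\in\Gamma\}$. *)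

theory Defs
  imports Main "HOL-Analysis.Analysis"
begin

definition simplicial_complex :: "'v set \<Rightarrow> 'v set set \<Rightarrow> bool" where
  "simplicial_complex V K \<longleftrightarrow> finite V \<and> {} \<in> K \<and> (\<forall>\<sigma>\<in>K. \<sigma> \<subseteq> V)
     \<and> (\<forall>\<sigma>\<in>K. \<forall>\<tau>. \<tau> \<subseteq> \<sigma> \<longrightarrow> \<tau> \<in> K)"

definition join :: "'v set set \<Rightarrow> 'v set set \<Rightarrow> 'v set set" where
  "join K L = {\<sigma> \<union> \<tau> | \<sigma> \<tau>. \<sigma> \<in> K \<and> \<tau> \<in> L}"

text \<open>Euclidean space R^d, modelled as real sequences vanishing from index d on.\<close>
definition Rd :: "nat \<Rightarrow> (nat \<Rightarrow> real) set" where
  "Rd d = {x. \<forall>j\<ge>d. x j = 0}"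

definition polytope_in :: "nat \<Rightarrow> (nat \<Rightarrow> real) set \<Rightarrow> bool" where
  "polytope_in d P \<longleftrightarrow> (\<exists>S. finite S \<and> S \<subseteq> Rd d \<and>
     P = {(\<lambda>j. \<Sum>s\<in>S. u s * s j) | u. (\<forall>s\<in>S. 0 \<le> u s) \<and> (\<Sum>s\<in>S. u s) = 1})"

definition msum :: "('v \<Rightarrow> (nat \<Rightarrow> real) set) \<Rightarrow> 'v set \<Rightarrow> (nat \<Rightarrow> real) set" where
  "msum P \<sigma> = {(\<lambda>j. \<Sum>i\<in>\<sigma>. x i j) | x. \<forall>i\<in>\<sigma>. x i \<in> P i}"

definition minkowski_complex :: "'v set \<Rightarrow> ('v \<Rightarrow> (nat \<Rightarrow> real) set) \<Rightarrow> (nat \<Rightarrow> real) \<Rightarrow> 'v set set" where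
  "minkowski_complex V P \<mu> = {\<sigma>. \<sigma> \<subseteq> V \<and> \<mu> \<notin> msum P \<sigma>}"

definition ctd_realizable :: "nat \<Rightarrow> 'v set \<Rightarrow> 'v set set \<Rightarrow> bool" where
  "ctd_realizable d V K \<longleftrightarrow> (\<exists>P \<mu>. (\<forall>i\<in>V. polytope_in d (P i) \<and> (\<lambda>_. 0) \<in> P i)
     \<and> \<mu> \<in> Rd d \<and> K = minkowski_complex V P \<mu>)"

definition ctd :: "'v set \<Rightarrow> 'v set set \<Rightarrow> nat" where
  "ctd V K = (LEAST d. ctd_realizable d V K)"

definition edge :: "'v set set \<Rightarrow> 'v \<Rightarrow> 'v \<Rightarrow> bool" where
  "edge K a b \<longleftrightarrow> a \<noteq> b \<and> {a, b} \<in> K"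

definition has_induced_2K2_P4_C4 :: "'v set \<Rightarrow> 'v set set \<Rightarrow> bool" where
  "has_induced_2K2_P4_C4 V K \<longleftrightarrow> (\<exists>a b c d. {a,b,c,d} \<subseteq> V \<and> distinct [a,b,c,d] \<and>
     edge K a b \<and> edge K c d \<and> \<not> edge K a c \<and> \<not> edge K b d \<and>
     ((\<not> edge K b c \<and> \<not> edge K a d) \<comment> \<open>2K_2\<close>
      \<or> (edge K b c \<and> \<not> edge K a d) \<comment> \<open>P_4: a-b-c-d\<close>
      \<or> (edge K b c \<and> edge K a d)))" \<comment> \<open>C_4: a-b-c-d-a\<close>

end

theory Submission
  imports Defs "HOL-Library.Function_Algebras"
begin

text \<open>Realize \<open>\<Delta> * \<Gamma>\<close> by polytopes \<open>P\<^sub>i\<close> and a point \<open>\<mu>\<close> in \<open>\<real>\<^sup>D\<close>, and take vertices \<open>a, b, c, d\<close>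
of \<open>\<Gamma>\<close> with edges \<open>ab, cd\<close> and non-edges \<open>ac, bd\<close>. The non-edges give \<open>\<mu> = p + q = r + s\<close> with
\<open>p \<in> P\<^sub>a, q \<in> P\<^sub>c, r \<in> P\<^sub>b, s \<in> P\<^sub>d\<close>, and the edge \<open>ab\<close> forces \<open>v = p + r - \<mu> \<noteq> 0\<close>.
For a face \<open>\<sigma>\<close> of \<open>\<Delta>\<close> the line \<open>\<mu> + \<real>v\<close> misses \<open>P\<^sub>\<sigma>\<close>: a point \<open>\<mu> + tv\<close> of \<open>P\<^sub>\<sigma>\<close> with \<open>t \<le> 0\<close>
puts \<open>\<mu>\<close> on the segment from it to \<open>p + r\<close>, so \<open>\<mu> \<in> P\<^bsub>\<sigma>\<union>{a,b}\<^esub>\<close> by convexity and \<open>0 \<in> P\<^sub>i\<close>; for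
\<open>t \<ge> 0\<close> the same happens with \<open>q + s\<close>, as \<open>v = \<mu> - q - s\<close>. Both contradict that \<open>\<sigma> \<union> {a,b}\<close>
and \<open>\<sigma> \<union> {c,d}\<close> are faces of the join, so projecting \<open>\<real>\<^sup>D\<close> along \<open>v\<close> realizes \<open>\<Delta>\<close> in \<open>\<real>\<^sup>D\<^sup>-\<^sup>1\<close>.\<close>

text \<open>The points \<open>nat \<Rightarrow> real\<close> of the definitions become a real vector space pointwise, so that
the library's convex hulls, segments and linear maps apply to them.\<close>

instantiation "fun" :: (type, real_vector) real_vector
begin

definition scaleR_fun :: "real \<Rightarrow> ('a \<Rightarrow> 'b) \<Rightarrow> 'a \<Rightarrow> 'b" where
  "scaleR_fun r f = (\<lambda>x. r *\<^sub>R f x)"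

instance
  by standard (simp_all add: scaleR_fun_def fun_eq_iff scaleR_add_right scaleR_add_left)

end

lemma scaleR_fun_apply [simp]: "(r *\<^sub>R f) x = r *\<^sub>R f x"
  by (simp add: scaleR_fun_def)

lemma sum_fun_apply: "(\<Sum>i\<in>A. f i) x = (\<Sum>i\<in>A. f i x)"
  by (induction A rule: infinite_finite_induct) auto

lemma sum_fun_eq: "(\<lambda>x. \<Sum>i\<in>A. f i x) = (\<Sum>i\<in>A. f i)"
  by (simp add: fun_eq_iff sum_fun_apply)

lemma subspace_Rd: "subspace (Rd d)"
  unfolding subspace_def Rd_def by simp

lemma Rd_0: "Rd 0 = {0}"
  unfolding Rd_def by (auto simp: fun_eq_iff)

lemma convex_hull_finite_pointwise:
  fixes S :: "(nat \<Rightarrow> real) set"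
  assumes "finite S"
  shows "convex hull S = {(\<lambda>j. \<Sum>s\<in>S. u s * s j) | u. (\<forall>s\<in>S. 0 \<le> u s) \<and> sum u S = 1}"
proof -
  have eq: "(\<Sum>s\<in>S. u s *\<^sub>R s) = (\<lambda>j. \<Sum>s\<in>S. u s * s j)" for u
    by (simp add: fun_eq_iff sum_fun_apply)
  show ?thesis
    unfolding convex_hull_finite[OF assms] eq by (intro Collect_cong) auto
qed

lemma polytope_in_iff_convex_hull:
  "polytope_in d P \<longleftrightarrow> (\<exists>S. finite S \<and> S \<subseteq> Rd d \<and> P = convex hull S)"
  unfolding polytope_in_def
  by (intro ex_cong1 conj_cong refl) (simp add: convex_hull_finite_pointwise)

lemma convex_polytope_in: "polytope_in d P \<Longrightarrow> convex P"
  unfolding polytope_in_iff_convex_hull by (elim exE conjE) simp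

lemma polytope_in_subset_Rd: "polytope_in d P \<Longrightarrow> P \<subseteq> Rd d"
  unfolding polytope_in_iff_convex_hull
proof (elim exE conjE)
  fix S assume "S \<subseteq> Rd d" "P = convex hull S"
  then show "P \<subseteq> Rd d"
    using hull_minimal[of S "Rd d" convex] subspace_imp_convex[OF subspace_Rd] by simp
qed

lemma polytope_in_linear_image:
  assumes "linear f" "f ` Rd d \<subseteq> Rd e" "polytope_in d P"
  shows "polytope_in e (f ` P)"
proof -
  obtain S where S: "finite S" "S \<subseteq> Rd d" "P = convex hull S"
    using assms(3) unfolding polytope_in_iff_convex_hull by blast
  then have "finite (f ` S)" "f ` S \<subseteq> Rd e" "f ` P = convex hull (f ` S)"
    using assms(1,2) by (auto simp: convex_hull_linear_image)
  then show ?thesis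
    unfolding polytope_in_iff_convex_hull by (intro exI[of _ "f ` S"]) simp
qed

lemma msum_eq: "msum P \<sigma> = {sum x \<sigma> | x. \<forall>i\<in>\<sigma>. x i \<in> P i}"
  unfolding msum_def sum_fun_eq ..

lemma msum_eq_set_sum: "finite \<sigma> \<Longrightarrow> msum P \<sigma> = (\<Sum>i\<in>\<sigma>. P i)"
  by (simp add: msum_eq set_sum_alt)

lemma msum_linear_image:
  assumes "linear f"
  shows "msum (\<lambda>i. f ` P i) \<sigma> = f ` msum P \<sigma>"
proof (intro set_eqI iffI)
  fix y assume "y \<in> msum (\<lambda>i. f ` P i) \<sigma>"
  then obtain y' where y': "\<forall>i\<in>\<sigma>. y' i \<in> f ` P i" "y = sum y' \<sigma>"
    unfolding msum_eq by blast
  then have "\<forall>i\<in>\<sigma>. \<exists>z. z \<in> P i \<and> y' i = f z"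
    by blast
  then have "\<exists>x. \<forall>i\<in>\<sigma>. x i \<in> P i \<and> y' i = f (x i)"
    by (rule bchoice)
  then obtain x where x: "\<forall>i\<in>\<sigma>. x i \<in> P i \<and> y' i = f (x i)"
    by blast
  then have "y = f (sum x \<sigma>)"
    using y'(2) by (simp add: linear_sum[OF assms])
  moreover have "sum x \<sigma> \<in> msum P \<sigma>"
    using x unfolding msum_eq by (intro CollectI exI[of _ x]) simp
  ultimately show "y \<in> f ` msum P \<sigma>"
    by (rule image_eqI)
next
  fix y assume "y \<in> f ` msum P \<sigma>"
  then obtain x where "\<forall>i\<in>\<sigma>. x i \<in> P i" "y = f (sum x \<sigma>)"
    unfolding msum_eq by blast
  then show "y \<in> msum (\<lambda>i. f ` P i) \<sigma>"
    unfolding msum_eq linear_sum[OF assms] by (intro CollectI exI[of _ "\<lambda>i. f (x i)"]) simp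
qed

lemma msum_mono:
  assumes "finite \<tau>" "\<sigma> \<subseteq> \<tau>" "\<forall>i\<in>\<tau> - \<sigma>. 0 \<in> P i"
  shows "msum P \<sigma> \<subseteq> msum P \<tau>"
proof -
  have fin: "finite \<sigma>"
    by (rule finite_subset[OF assms(2,1)])
  have "0 \<in> (\<Sum>i\<in>\<tau> - \<sigma>. P i)"
    unfolding set_sum_alt[OF finite_Diff[OF assms(1)]]
    by (intro CollectI exI[of _ "\<lambda>_. 0"]) (simp add: assms(3))
  then have "(\<Sum>i\<in>\<sigma>. P i) \<subseteq> (\<Sum>i\<in>\<tau> - \<sigma>. P i) + (\<Sum>i\<in>\<sigma>. P i)"
    by (rule set_zero_plus2)
  also have "\<dots> = (\<Sum>i\<in>\<tau>. P i)"
    by (rule sum.subset_diff[OF assms(2,1), symmetric])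
  finally show ?thesis
    using fin assms(1) by (simp add: msum_eq_set_sum)
qed

lemma msum_pair: "a \<noteq> b \<Longrightarrow> msum P {a, b} = P a + P b"
  by (simp add: msum_eq_set_sum)

lemma convex_msum: "finite \<sigma> \<Longrightarrow> (\<And>i. i \<in> \<sigma> \<Longrightarrow> convex (P i)) \<Longrightarrow> convex (msum P \<sigma>)"
  by (simp add: msum_eq_set_sum convex_set_sum)

lemma mem_closed_segment_if_extrapolates:
  fixes z w \<mu> :: "'a::real_vector"
  assumes "0 \<le> t" "z = \<mu> + t *\<^sub>R (\<mu> - w)"
  shows "\<mu> \<in> closed_segment z w"
proof -
  have t: "1 + t \<noteq> 0" "1 - t / (1 + t) = 1 / (1 + t)"
    using assms(1) by (simp_all add: field_simps)
  have "(1 + t) *\<^sub>R \<mu> = z + t *\<^sub>R w"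
    using assms(2) by (simp add: algebra_simps)
  then have "(1 / (1 + t)) *\<^sub>R ((1 + t) *\<^sub>R \<mu>) = (1 / (1 + t)) *\<^sub>R (z + t *\<^sub>R w)"
    by simp
  then have "\<mu> = (1 - t / (1 + t)) *\<^sub>R z + (t / (1 + t)) *\<^sub>R w"
    using t by (simp add: scaleR_add_right)
  moreover have "0 \<le> t / (1 + t)" "t / (1 + t) \<le> 1"
    using assms(1) by auto
  ultimately show ?thesis
    unfolding closed_segment_def by blast
qed

lemma mem_msum_Un_if_extrapolates:
  assumes "finite (\<sigma> \<union> \<tau>)" "\<forall>i\<in>\<sigma> \<union> \<tau>. convex (P i) \<and> 0 \<in> P i"
    and "w \<in> msum P \<tau>" "0 \<le> t" "\<mu> + t *\<^sub>R (\<mu> - w) \<in> msum P \<sigma>"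
  shows "\<mu> \<in> msum P (\<sigma> \<union> \<tau>)"
proof -
  have "\<mu> \<in> closed_segment (\<mu> + t *\<^sub>R (\<mu> - w)) w"
    using assms(4) by (rule mem_closed_segment_if_extrapolates) simp
  also have "\<dots> \<subseteq> msum P (\<sigma> \<union> \<tau>)"
  proof (rule closed_segment_subset)
    show "\<mu> + t *\<^sub>R (\<mu> - w) \<in> msum P (\<sigma> \<union> \<tau>)" "w \<in> msum P (\<sigma> \<union> \<tau>)"
      using assms msum_mono[of "\<sigma> \<union> \<tau>"] by blast+
    show "convex (msum P (\<sigma> \<union> \<tau>))"
      using assms(1,2) convex_msum[of "\<sigma> \<union> \<tau>" P] by blast
  qed
  finally show ?thesis .
qed

text \<open>Projection along \<open>v\<close> that forgets coordinate \<open>k\<close> and renumbers the later ones; for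
\<open>v k \<noteq> 0\<close> its kernel is the line spanned by \<open>v\<close>.\<close>

definition collapse :: "nat \<Rightarrow> (nat \<Rightarrow> real) \<Rightarrow> (nat \<Rightarrow> real) \<Rightarrow> nat \<Rightarrow> real" where
  "collapse k v x = (\<lambda>j. (x - (x k / v k) *\<^sub>R v) (if j < k then j else Suc j))"

lemma linear_collapse: "linear (collapse k v)"
  by (rule linearI) (simp_all add: collapse_def fun_eq_iff add_divide_distrib algebra_simps)

lemma collapse_eq_iff:
  assumes "v k \<noteq> 0"
  shows "collapse k v x = collapse k v y \<longleftrightarrow> (\<exists>t. x = y + t *\<^sub>R v)"
proof
  assume eq: "collapse k v x = collapse k v y"
  define t where "t = (x k - y k) / v k"
  have "x i = y i + t * v i" for i
  proof (cases "i = k")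
    case True
    then show ?thesis using assms by (simp add: t_def)
  next
    case False
    then obtain j where "i = (if j < k then j else Suc j)"
      by (metis Suc_pred linorder_neqE_nat not_less_eq not_less0 less_imp_not_less)
    then show ?thesis
      using fun_cong[OF eq, of j] assms by (simp add: collapse_def t_def field_simps)
  qed
  then show "\<exists>t. x = y + t *\<^sub>R v"
    by (auto simp: fun_eq_iff)
next
  assume "\<exists>t. x = y + t *\<^sub>R v"
  then show "collapse k v x = collapse k v y"
    using assms by (auto simp: collapse_def fun_eq_iff field_simps)
qed

lemma collapse_Rd:
  assumes "k < d" "v \<in> Rd d" "x \<in> Rd d"
  shows "collapse k v x \<in> Rd (d - 1)"
  using assms by (auto simp: Rd_def collapse_def)

lemma minkowski_complex_collapse:
  assumes "v k \<noteq> 0"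
  shows "minkowski_complex V (\<lambda>i. collapse k v ` P i) (collapse k v \<mu>)
           = {\<sigma>. \<sigma> \<subseteq> V \<and> (\<forall>t. \<mu> + t *\<^sub>R v \<notin> msum P \<sigma>)}"
proof -
  have "collapse k v z = collapse k v \<mu> \<longleftrightarrow> (\<exists>t. z = \<mu> + t *\<^sub>R v)" for z
    using collapse_eq_iff[of v k z \<mu>] assms by blast
  then have "collapse k v \<mu> \<in> collapse k v ` A \<longleftrightarrow> (\<exists>t. \<mu> + t *\<^sub>R v \<in> A)" for A
    unfolding image_iff by metis
  then show ?thesis
    unfolding minkowski_complex_def msum_linear_image[OF linear_collapse] by blast
qed

lemma ctd_realizable_along_line:
  assumes "\<forall>i\<in>V. polytope_in d (P i) \<and> 0 \<in> P i" "\<mu> \<in> Rd d" "v \<in> Rd d" "v \<noteq> 0"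
  shows "ctd_realizable (d - 1) V {\<sigma>. \<sigma> \<subseteq> V \<and> (\<forall>t. \<mu> + t *\<^sub>R v \<notin> msum P \<sigma>)}"
proof -
  obtain k where k: "v k \<noteq> 0"
    using assms(4) by (auto simp: fun_eq_iff)
  then have "k < d"
    using assms(3) by (auto simp: Rd_def not_less[symmetric])
  then have Rd: "collapse k v ` Rd d \<subseteq> Rd (d - 1)"
    using assms(3) collapse_Rd by blast
  have "polytope_in (d - 1) (collapse k v ` P i) \<and> (\<lambda>_. 0) \<in> collapse k v ` P i" if "i \<in> V" for i
    using assms(1) that polytope_in_linear_image[OF linear_collapse Rd]
      linear_0[OF linear_collapse, of k v] by (force simp: zero_fun_def)
  moreover have "collapse k v \<mu> \<in> Rd (d - 1)"
    using Rd assms(2) by blast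
  ultimately show ?thesis
    unfolding ctd_realizable_def minkowski_complex_collapse[of v k, OF k, symmetric]
    by (intro exI[of _ "\<lambda>i. collapse k v ` P i"] exI[of _ "collapse k v \<mu>"]) blast
qed

lemma line_avoids_msum:
  assumes "finite \<sigma>" "\<forall>i\<in>\<sigma> \<union> {a, b, c, d}. convex (P i) \<and> 0 \<in> P i" "a \<noteq> b" "c \<noteq> d"
    and "p \<in> P a" "r \<in> P b" "q \<in> P c" "s \<in> P d" "\<mu> = p + q" "\<mu> = r + s"
    and "\<mu> \<notin> msum P (\<sigma> \<union> {a, b})" "\<mu> \<notin> msum P (\<sigma> \<union> {c, d})"
  shows "\<mu> + t *\<^sub>R (p + r - \<mu>) \<notin> msum P \<sigma>"
proof
  assume z: "\<mu> + t *\<^sub>R (p + r - \<mu>) \<in> msum P \<sigma>"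
  have conv: "\<forall>i\<in>\<sigma> \<union> {a, b}. convex (P i) \<and> 0 \<in> P i" "\<forall>i\<in>\<sigma> \<union> {c, d}. convex (P i) \<and> 0 \<in> P i"
    using assms(2) by auto
  have fin: "finite (\<sigma> \<union> {a, b})" "finite (\<sigma> \<union> {c, d})"
    using assms(1) by simp_all
  show False
  proof (cases "t \<le> 0")
    case True
    have line: "\<mu> + (- t) *\<^sub>R (\<mu> - (p + r)) = \<mu> + t *\<^sub>R (p + r - \<mu>)"
      by (simp add: algebra_simps)
    have "p + r \<in> msum P {a, b}"
      using assms(3,5,6) by (simp add: msum_pair set_plus_intro)
    moreover have "0 \<le> - t"
      using True by simp
    moreover have "\<mu> + (- t) *\<^sub>R (\<mu> - (p + r)) \<in> msum P \<sigma>"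
      using z unfolding line .
    ultimately have "\<mu> \<in> msum P (\<sigma> \<union> {a, b})"
      by (rule mem_msum_Un_if_extrapolates[OF fin(1) conv(1)])
    then show False
      using assms(11) by contradiction
  next
    case False
    have "p + r - \<mu> = (p + q) + (r + s) - \<mu> - (q + s)"
      by (simp add: algebra_simps)
    also have "\<dots> = \<mu> - (q + s)"
      using assms(9,10) by simp
    finally have line: "p + r - \<mu> = \<mu> - (q + s)" .
    have "q + s \<in> msum P {c, d}"
      using assms(4,7,8) by (simp add: msum_pair set_plus_intro)
    moreover have "0 \<le> t"
      using False by simp
    moreover have "\<mu> + t *\<^sub>R (\<mu> - (q + s)) \<in> msum P \<sigma>"
      using z unfolding line .
    ultimately have "\<mu> \<in> msum P (\<sigma> \<union> {c, d})"
      by (rule mem_msum_Un_if_extrapolates[OF fin(2) conv(2)])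
    then show False
      using assms(12) by contradiction
  qed
qed

lemma simplicial_complexD:
  assumes "simplicial_complex V K"
  shows "finite V" "{} \<in> K" "\<sigma> \<in> K \<Longrightarrow> \<sigma> \<subseteq> V" "\<sigma> \<in> K \<Longrightarrow> \<tau> \<subseteq> \<sigma> \<Longrightarrow> \<tau> \<in> K"
  using assms unfolding simplicial_complex_def by blast+

lemma Un_mem_join: "\<sigma> \<in> K \<Longrightarrow> \<tau> \<in> L \<Longrightarrow> \<sigma> \<union> \<tau> \<in> join K L"
  unfolding join_def by blast

lemma join_commute: "join K L = join L K"
  unfolding join_def by blast

lemma joinE:
  assumes "\<sigma> \<in> join K L"
  obtains \<rho> \<tau> where "\<sigma> = \<rho> \<union> \<tau>" "\<rho> \<in> K" "\<tau> \<in> L"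
  using assms unfolding join_def by blast

lemma simplicial_complex_join:
  assumes K: "simplicial_complex V K" and L: "simplicial_complex W L"
  shows "simplicial_complex (V \<union> W) (join K L)"
  unfolding simplicial_complex_def
proof (intro conjI ballI allI impI)
  show "finite (V \<union> W)"
    using simplicial_complexD(1)[OF K] simplicial_complexD(1)[OF L] by simp
  show "{} \<in> join K L"
    using Un_mem_join[OF simplicial_complexD(2)[OF K] simplicial_complexD(2)[OF L]] by simp
next
  fix \<sigma> assume "\<sigma> \<in> join K L"
  then obtain \<rho> \<rho>' where "\<sigma> = \<rho> \<union> \<rho>'" "\<rho> \<in> K" "\<rho>' \<in> L"
    by (rule joinE)
  then show "\<sigma> \<subseteq> V \<union> W"
    using simplicial_complexD(3)[OF K] simplicial_complexD(3)[OF L] by blast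
next
  fix \<sigma> \<tau> assume "\<sigma> \<in> join K L" "\<tau> \<subseteq> \<sigma>"
  obtain \<rho> \<rho>' where \<rho>: "\<sigma> = \<rho> \<union> \<rho>'" "\<rho> \<in> K" "\<rho>' \<in> L"
    using \<open>\<sigma> \<in> join K L\<close> by (rule joinE)
  have "\<tau> \<inter> \<rho> \<in> K" "\<tau> \<inter> \<rho>' \<in> L"
    using simplicial_complexD(4)[OF K \<rho>(2)] simplicial_complexD(4)[OF L \<rho>(3)] by simp_all
  then have "(\<tau> \<inter> \<rho>) \<union> (\<tau> \<inter> \<rho>') \<in> join K L"
    by (rule Un_mem_join)
  moreover have "(\<tau> \<inter> \<rho>) \<union> (\<tau> \<inter> \<rho>') = \<tau>"
    using \<open>\<tau> \<subseteq> \<sigma>\<close> \<rho>(1) by blast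
  ultimately show "\<tau> \<in> join K L"
    by simp
qed

lemma mem_join_iff_left:
  assumes L: "simplicial_complex W L" and "V \<inter> W = {}" "\<sigma> \<subseteq> V"
  shows "\<sigma> \<in> join K L \<longleftrightarrow> \<sigma> \<in> K"
proof
  assume "\<sigma> \<in> join K L"
  then obtain \<rho> \<tau> where \<sigma>: "\<sigma> = \<rho> \<union> \<tau>" "\<rho> \<in> K" "\<tau> \<in> L"
    by (rule joinE)
  have "\<tau> \<subseteq> W"
    using simplicial_complexD(3)[OF L \<sigma>(3)] .
  then have "\<tau> = {}"
    using assms(2,3) \<sigma>(1) by blast
  then show "\<sigma> \<in> K"
    using \<sigma>(1,2) by simp
next
  assume "\<sigma> \<in> K"
  then show "\<sigma> \<in> join K L"
    using Un_mem_join[OF _ simplicial_complexD(2)[OF L]] by simp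
qed

lemma mem_join_iff_right:
  assumes "simplicial_complex V K" "V \<inter> W = {}" "\<tau> \<subseteq> W"
  shows "\<tau> \<in> join K L \<longleftrightarrow> \<tau> \<in> L"
proof -
  have "W \<inter> V = {}"
    using assms(2) by blast
  from assms(1) this assms(3) have "\<tau> \<in> join L K \<longleftrightarrow> \<tau> \<in> L"
    by (rule mem_join_iff_left)
  then show ?thesis
    unfolding join_commute[of K L] .
qed

lemma join_nonedge_mem_set_plus:
  assumes K: "simplicial_complex V K" and VW: "V \<inter> W = {}"
    and J: "join K L = minkowski_complex (V \<union> W) P \<mu>"
    and "{x, y} \<subseteq> W" "\<not> edge L x y" "x \<noteq> y"
  shows "\<mu> \<in> P x + P y"
proof -
  have "{x, y} \<notin> join K L"
    using assms(5,6) mem_join_iff_right[OF K VW assms(4)] by (simp add: edge_def)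
  then have "\<mu> \<in> msum P {x, y}"
    using assms(4) unfolding J minkowski_complex_def by blast
  then show ?thesis
    using assms(6) by (simp add: msum_pair)
qed

lemma join_edge_not_mem_msum:
  assumes J: "join K L = minkowski_complex U P \<mu>" and "\<sigma> \<in> K" "edge L x y"
  shows "\<mu> \<notin> msum P (\<sigma> \<union> {x, y})"
proof -
  have "{x, y} \<in> L"
    using assms(3) by (simp add: edge_def)
  with assms(2) have "\<sigma> \<union> {x, y} \<in> join K L"
    by (rule Un_mem_join)
  then show ?thesis
    unfolding J minkowski_complex_def by simp
qed

lemma line_of_join_realization:
  assumes K: "simplicial_complex V K" and L: "simplicial_complex W L" and VW: "V \<inter> W = {}"
    and W: "{a, b, c, d} \<subseteq> W" and ab: "edge L a b" and cd: "edge L c d"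
    and ac: "\<not> edge L a c" "a \<noteq> c" and bd: "\<not> edge L b d" "b \<noteq> d"
    and P: "\<forall>i\<in>V \<union> W. polytope_in D (P i) \<and> 0 \<in> P i" and \<mu>: "\<mu> \<in> Rd D"
    and J: "join K L = minkowski_complex (V \<union> W) P \<mu>"
  obtains v where "v \<in> Rd D" "v \<noteq> 0" "K = {\<sigma>. \<sigma> \<subseteq> V \<and> (\<forall>t. \<mu> + t *\<^sub>R v \<notin> msum P \<sigma>)}"
proof -
  note edge = join_edge_not_mem_msum[OF J]
  have "\<mu> \<in> P a + P c" "\<mu> \<in> P b + P d"
    using join_nonedge_mem_set_plus[OF K VW J] W ac bd by simp_all
  then obtain p q r s where pq: "\<mu> = p + q" "p \<in> P a" "q \<in> P c" and rs: "\<mu> = r + s" "r \<in> P b" "s \<in> P d"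
    by (elim set_plus_elim)
  have "a \<noteq> b" "c \<noteq> d"
    using ab cd by (simp_all add: edge_def)
  have "p + r \<in> msum P ({} \<union> {a, b})"
    using \<open>a \<noteq> b\<close> pq(2) rs(2) by (simp add: msum_pair set_plus_intro)
  then have nonzero: "p + r - \<mu> \<noteq> 0"
    using edge[OF simplicial_complexD(2)[OF K] ab] by auto
  have "p \<in> Rd D" "r \<in> Rd D"
    using P W pq(2) rs(2) polytope_in_subset_Rd by blast+
  then have "p + r - \<mu> \<in> Rd D"
    using \<mu> by (intro subspace_diff subspace_add subspace_Rd)
  moreover note nonzero
  moreover have "K = {\<sigma>. \<sigma> \<subseteq> V \<and> (\<forall>t. \<mu> + t *\<^sub>R (p + r - \<mu>) \<notin> msum P \<sigma>)}"
  proof (intro set_eqI iffI CollectI conjI allI)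
    fix \<sigma> t assume \<sigma>: "\<sigma> \<in> K"
    show "\<sigma> \<subseteq> V"
      using \<sigma> by (rule simplicial_complexD(3)[OF K])
    then have "finite \<sigma>"
      using simplicial_complexD(1)[OF K] by (rule finite_subset)
    moreover have "\<forall>i\<in>\<sigma> \<union> {a, b, c, d}. convex (P i) \<and> 0 \<in> P i"
      using P W \<open>\<sigma> \<subseteq> V\<close> convex_polytope_in by blast
    ultimately show "\<mu> + t *\<^sub>R (p + r - \<mu>) \<notin> msum P \<sigma>"
      by (rule line_avoids_msum[OF _ _ \<open>a \<noteq> b\<close> \<open>c \<noteq> d\<close> pq(2) rs(2) pq(3) rs(3) pq(1) rs(1)
            edge[OF \<sigma> ab] edge[OF \<sigma> cd]])
  next
    fix \<sigma> assume "\<sigma> \<in> {\<sigma>. \<sigma> \<subseteq> V \<and> (\<forall>t. \<mu> + t *\<^sub>R (p + r - \<mu>) \<notin> msum P \<sigma>)}"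
    then have "\<sigma> \<subseteq> V" "\<mu> + 0 *\<^sub>R (p + r - \<mu>) \<notin> msum P \<sigma>"
      by blast+
    then have "\<sigma> \<in> join K L"
      unfolding J minkowski_complex_def by auto
    then show "\<sigma> \<in> K"
      using mem_join_iff_left[OF L VW \<open>\<sigma> \<subseteq> V\<close>] by simp
  qed
  ultimately show thesis
    by (rule that)
qed

text \<open>A universal realization of a complex whose faces are \<open>g 0, \<dots>, g (m - 1)\<close>: coordinate \<open>j\<close>
stands for the face \<open>g j\<close>, the polytope of a vertex \<open>i\<close> is the unit cube on the coordinates of
the faces avoiding \<open>i\<close>, and \<open>\<mu>\<close> is the all-ones vector \<open>indicator {..<m}\<close>.\<close>

definition face_cube :: "nat \<Rightarrow> (nat \<Rightarrow> 'a set) \<Rightarrow> 'a \<Rightarrow> (nat \<Rightarrow> real) set" where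
  "face_cube m g i = convex hull (indicator ` Pow {j. j < m \<and> i \<notin> g j})"

lemma indicator_mem_face_cube: "J \<subseteq> {j. j < m \<and> i \<notin> g j} \<Longrightarrow> indicator J \<in> face_cube m g i"
  unfolding face_cube_def by (simp add: hull_inc)

lemma zero_mem_face_cube: "0 \<in> face_cube m g i"
proof -
  have "indicator {} = (0 :: nat \<Rightarrow> real)"
    by (simp add: fun_eq_iff)
  then show ?thesis
    using indicator_mem_face_cube[of "{}" m i g] by simp
qed

lemma polytope_in_face_cube: "polytope_in m (face_cube m g i)"
proof -
  have "finite {j. j < m \<and> i \<notin> g j}"
    by simp
  moreover have "indicator ` Pow {j. j < m \<and> i \<notin> g j} \<subseteq> Rd m"
    by (auto simp: Rd_def indicator_def)
  ultimately show ?thesis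
    unfolding polytope_in_iff_convex_hull face_cube_def
    by (intro exI[of _ "indicator ` Pow {j. j < m \<and> i \<notin> g j}"]) simp
qed

lemma indicator_mem_msum_face_cube:
  assumes "finite \<sigma>" "\<forall>j<m. \<exists>i\<in>\<sigma>. i \<notin> g j"
  shows "indicator {..<m} \<in> msum (face_cube m g) \<sigma>"
proof -
  have "\<forall>j\<in>{..<m}. \<exists>i. i \<in> \<sigma> \<and> i \<notin> g j"
    using assms(2) by blast
  then have "\<exists>ch. \<forall>j\<in>{..<m}. ch j \<in> \<sigma> \<and> ch j \<notin> g j"
    by (rule bchoice)
  then obtain ch where ch: "\<forall>j\<in>{..<m}. ch j \<in> \<sigma> \<and> ch j \<notin> g j"
    by blast
  \<comment> \<open>every coordinate is covered by the cube of the vertex \<open>ch j\<close> chosen for it\<close>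
  have "(\<Sum>i\<in>\<sigma>. indicator {j. j < m \<and> ch j = i} k) = (indicator {..<m} k :: real)" for k
  proof (cases "k < m")
    case True
    then have "(\<Sum>i\<in>\<sigma>. indicator {j. j < m \<and> ch j = i} k) = (\<Sum>i\<in>\<sigma>. if ch k = i then 1 else 0 :: real)"
      by (intro sum.cong) (auto simp: indicator_def)
    also have "\<dots> = 1"
      using assms(1) ch True by simp
    finally show ?thesis
      using True by simp
  qed simp
  then have "indicator {..<m} = (\<Sum>i\<in>\<sigma>. indicator {j. j < m \<and> ch j = i} :: nat \<Rightarrow> real)"
    by (simp add: fun_eq_iff sum_fun_apply)
  moreover have "\<forall>i\<in>\<sigma>. indicator {j. j < m \<and> ch j = i} \<in> face_cube m g i"
    using ch by (auto intro!: indicator_mem_face_cube)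
  ultimately show ?thesis
    unfolding msum_eq by (intro CollectI exI[of _ "\<lambda>i. indicator {j. j < m \<and> ch j = i}"]) simp
qed

lemma indicator_not_mem_msum_face_cube:
  assumes "j < m" "\<sigma> \<subseteq> g j"
  shows "indicator {..<m} \<notin> msum (face_cube m g) \<sigma>"
proof
  assume "indicator {..<m} \<in> msum (face_cube m g) \<sigma>"
  then obtain x where x: "\<forall>i\<in>\<sigma>. x i \<in> face_cube m g i" "indicator {..<m} = sum x \<sigma>"
    unfolding msum_eq by blast
  have "face_cube m g i \<subseteq> {y. y j = 0}" if "i \<in> \<sigma>" for i
    unfolding face_cube_def
  proof (rule hull_minimal)
    show "indicator ` Pow {j. j < m \<and> i \<notin> g j} \<subseteq> {y. y j = 0}"
      using that assms(2) by (auto simp: indicator_def)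
    show "convex {y :: nat \<Rightarrow> real. y j = 0}"
      by (rule subspace_imp_convex) (simp add: subspace_def)
  qed
  then have "(\<Sum>i\<in>\<sigma>. x i j) = 0"
    using x(1) by (intro sum.neutral) blast
  moreover have "indicator {..<m} j = (\<Sum>i\<in>\<sigma>. x i j)"
    using x(2) by (simp add: sum_fun_apply)
  ultimately show False
    using assms(1) by simp
qed

lemma ctd_realizable_exists:
  assumes U: "simplicial_complex U M"
  shows "\<exists>d. ctd_realizable d U M"
proof -
  have "M \<subseteq> Pow U"
    using simplicial_complexD(3)[OF U] by auto
  then have "finite M"
    by (rule finite_subset) (simp add: simplicial_complexD(1)[OF U])
  then obtain m :: nat and g where M: "M = g ` {j. j < m}"
    using finite_imp_nat_seg_image_inj_on[of M] by blast
  have "M = minkowski_complex U (face_cube m g) (indicator {..<m})"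
  proof (intro set_eqI iffI)
    fix \<sigma> assume "\<sigma> \<in> M"
    then obtain j where "j < m" "\<sigma> = g j"
      using M by blast
    then have "indicator {..<m} \<notin> msum (face_cube m g) \<sigma>"
      by (intro indicator_not_mem_msum_face_cube) auto
    with simplicial_complexD(3)[OF U \<open>\<sigma> \<in> M\<close>]
    show "\<sigma> \<in> minkowski_complex U (face_cube m g) (indicator {..<m})"
      unfolding minkowski_complex_def by simp
  next
    fix \<sigma> assume "\<sigma> \<in> minkowski_complex U (face_cube m g) (indicator {..<m})"
    then have "\<sigma> \<subseteq> U" "indicator {..<m} \<notin> msum (face_cube m g) \<sigma>"
      unfolding minkowski_complex_def by blast+
    moreover have "finite \<sigma>"
      using finite_subset[OF \<open>\<sigma> \<subseteq> U\<close> simplicial_complexD(1)[OF U]] .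
    ultimately obtain j where "j < m" "\<sigma> \<subseteq> g j"
      using indicator_mem_msum_face_cube[of \<sigma> m g] by blast
    moreover have "g j \<in> M"
      using M \<open>j < m\<close> by blast
    ultimately show "\<sigma> \<in> M"
      using simplicial_complexD(4)[OF U] by blast
  qed
  moreover have "indicator {..<m} \<in> Rd m"
    by (simp add: Rd_def)
  ultimately show ?thesis
    unfolding ctd_realizable_def zero_fun_def[symmetric]
    by (intro exI[of _ m] exI[of _ "face_cube m g"] exI[of _ "indicator {..<m}"])
      (simp add: polytope_in_face_cube zero_mem_face_cube)
qed

lemma ctd_realizable_ctd:
  "simplicial_complex V K \<Longrightarrow> ctd_realizable (ctd V K) V K"
  unfolding ctd_def by (rule LeastI_ex) (rule ctd_realizable_exists)

lemma ctd_le: "ctd_realizable d V K \<Longrightarrow> ctd V K \<le> d"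
  unfolding ctd_def by (rule Least_le)

theorem theorem3:
  fixes V W :: "'v set" and K L :: "'v set set"
  assumes "simplicial_complex V K"
    and "simplicial_complex W L"
    and "V \<inter> W = {}"
    and "has_induced_2K2_P4_C4 W L"
  shows "ctd (V \<union> W) (join K L) \<ge> ctd V K + 1"
proof -
  obtain a b c d where abcd: "{a, b, c, d} \<subseteq> W" "distinct [a, b, c, d]"
    and edges: "edge L a b" "edge L c d" "\<not> edge L a c" "\<not> edge L b d"
    using assms(4) unfolding has_induced_2K2_P4_C4_def by blast
  define D where "D = ctd (V \<union> W) (join K L)"
  obtain P \<mu> where P: "\<forall>i\<in>V \<union> W. polytope_in D (P i) \<and> 0 \<in> P i" and \<mu>: "\<mu> \<in> Rd D"
    and J: "join K L = minkowski_complex (V \<union> W) P \<mu>"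
    using ctd_realizable_ctd[OF simplicial_complex_join[OF assms(1,2)]]
    unfolding D_def ctd_realizable_def zero_fun_def[symmetric] by blast
  obtain v where v: "v \<in> Rd D" "v \<noteq> 0"
    and K: "K = {\<sigma>. \<sigma> \<subseteq> V \<and> (\<forall>t. \<mu> + t *\<^sub>R v \<notin> msum P \<sigma>)}"
    using line_of_join_realization[OF assms(1-3) abcd(1) edges(1,2,3) _ edges(4) _ P \<mu> J] abcd(2) by auto
  have "ctd V K \<le> D - 1"
    using ctd_realizable_along_line[of V D P \<mu> v] P \<mu> v
    by (subst K) (intro ctd_le, simp)
  moreover have "D \<noteq> 0"
  proof
    assume "D = 0"
    then show False
      using v Rd_0 by simp
  qed
  ultimately show ?thesis
    unfolding D_def by linarith
qed

end
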